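(* For every $n\ge1$, no locally valid MV assignment of $M_{2,n}$ has exactly $2n-1$ flippable faces; equivalently, no vertex of ${\rm OFG}(M_{2,n})$ has degree $2n-1$.
   Context: The $2\times n$ Miura-ori $M_{2,n}$ ($n\ge1$) has faces $\alpha_{i,j}$ ($i\in\{1,2\}$, $j\in\{1,\dots,n\}$), interior vertices $x_1,\dots,x_{n-1}$, and creases $e_0$ and $e_{3k-1},e_{3k},e_{3k+1}$ ($k=1,\dots,n-1$). At $x_k$ the creases are left $e_{3k-3}$, top $e_{3k-1}$, right $e_{3k}$, bottom $e_{3k+1}$. Face $\alpha_{1,j}$ is bordered by those of $e_{3j-4}$ (iff $j\ge2$), $e_{3j-3}$, $e_{3j-1}$ (iff $j\le n-1$); $\alpha_{2,j}$ by those of $e_{3j-2}$ (iff $j\ge2$), $e_{3j-3}$, $e_{3j+1}$ (iff $j\le n-1$). An MV assignment $\mu$ maps creases to $\{1,-1\}$; it is locally valid if for each $k$ exactly one of $\mu(e_{3k-1}),\mu(e_{3k}),\mu(e_{3k+1})$ differs from $\mu(e_{3k-3})$. The face flip $\mu_\alpha$ negates $\mu$ on the creases bordering $\alpha$; $\alpha$ is flippable under $\mu$ if $\mu,\mu_\alpha$ are both locally valid. ${\rm OFG}(M_{2,n})$ has the locally valid assignments as vertices, with $\mu\sim\mu_\alpha$ for each flippable $\alpha$; the degree of $\mu$ is its number of flippable faces. *)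

theory Defs
  imports Main
begin

text \<open>Crease e_m is represented by the natural number m.
  Creases: e_0 and e_{3k-1}, e_{3k}, e_{3k+1} for k = 1..n-1.
  Faces alpha_{i,j} are represented by pairs (i,j) with i in {1,2}, j in {1..n}.
  MV assignments are functions nat => int taking values in {1,-1} on the creases.\<close>

definition creases :: "nat \<Rightarrow> nat set" where
  "creases n = {0} \<union> (\<Union>k\<in>{1..n-1}. {3*k-1, 3*k, 3*k+1})"

definition faces :: "nat \<Rightarrow> (nat \<times> nat) set" where
  "faces n = {1,2} \<times> {1..n}"

definition is_MV :: "nat \<Rightarrow> (nat \<Rightarrow> int) \<Rightarrow> bool" where
  "is_MV n \<mu> \<longleftrightarrow> (\<forall>c\<in>creases n. \<mu> c = 1 \<or> \<mu> c = -1)"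

definition border :: "nat \<Rightarrow> nat \<times> nat \<Rightarrow> nat set" where
  "border n f = (case f of (i, j) \<Rightarrow>
     if i = 1 then
       (if 2 \<le> j then {3*j-4} else {}) \<union> {3*j-3} \<union> (if j \<le> n-1 then {3*j-1} else {})
     else
       (if 2 \<le> j then {3*j-2} else {}) \<union> {3*j-3} \<union> (if j \<le> n-1 then {3*j+1} else {}))"

text \<open>Local validity: at each interior vertex x_k exactly one of the top, right, bottom
  creases differs from the left crease.\<close>
definition locally_valid :: "nat \<Rightarrow> (nat \<Rightarrow> int) \<Rightarrow> bool" where
  "locally_valid n \<mu> \<longleftrightarrow>
     (\<forall>k\<in>{1..n-1}. card {c\<in>{3*k-1, 3*k, 3*k+1}. \<mu> c \<noteq> \<mu> (3*k-3)} = 1)"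

definition face_flip :: "nat \<Rightarrow> (nat \<Rightarrow> int) \<Rightarrow> nat \<times> nat \<Rightarrow> (nat \<Rightarrow> int)" where
  "face_flip n \<mu> f = (\<lambda>c. if c \<in> border n f then - \<mu> c else \<mu> c)"

definition flippable :: "nat \<Rightarrow> (nat \<Rightarrow> int) \<Rightarrow> nat \<times> nat \<Rightarrow> bool" where
  "flippable n \<mu> f \<longleftrightarrow> locally_valid n \<mu> \<and> locally_valid n (face_flip n \<mu> f)"

definition ofg_degree :: "nat \<Rightarrow> (nat \<Rightarrow> int) \<Rightarrow> nat" where
  "ofg_degree n \<mu> = card {f\<in>faces n. flippable n \<mu> f}"

end

theory Submission imports Defs begin

text \<open>With signs in {1,-1}, a vertex is valid iff its four creases split 3:1 with the odd
  crease not the left one. A face flip negates exactly two creases at each vertex it touches;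
  this keeps the split 3:1, and the flipped vertex is valid unless the left crease becomes the
  odd one. So if every vertex has its right crease odd, all 2n faces are flippable. If some x_k
  has its top crease odd, flipping alpha_{1,k} or alpha_{2,k+1} makes the left crease odd at
  x_k (symmetrically alpha_{2,k} and alpha_{1,k+1} for the bottom crease), so the degree is at
  most 2n-2.\<close>

definition valid_vertex :: "int \<Rightarrow> int \<Rightarrow> int \<Rightarrow> int \<Rightarrow> bool" where
  "valid_vertex l t r b \<longleftrightarrow>
     (t \<noteq> l \<and> r = l \<and> b = l) \<or> (t = l \<and> r \<noteq> l \<and> b = l) \<or> (t = l \<and> r = l \<and> b \<noteq> l)"

lemma valid_vertex_flip:
  assumes "valid_vertex l t r b" and "l \<in> {1, -1}" "t \<in> {1, -1}" "r \<in> {1, -1}" "b \<in> {1, -1}"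
  shows "valid_vertex (- l) (- t) r b \<longleftrightarrow> t = l"
    and "valid_vertex l (- t) (- r) b \<longleftrightarrow> b = l"
    and "valid_vertex (- l) t r (- b) \<longleftrightarrow> b = l"
    and "valid_vertex l t (- r) (- b) \<longleftrightarrow> t = l"
  using assms unfolding valid_vertex_def by auto

lemma card_filter_three_eq_1:
  assumes "x \<noteq> y" "x \<noteq> z" "y \<noteq> z"
  shows "card {c\<in>{x, y, z}. P c} = 1 \<longleftrightarrow>
     (P x \<and> \<not> P y \<and> \<not> P z) \<or> (\<not> P x \<and> P y \<and> \<not> P z) \<or> (\<not> P x \<and> \<not> P y \<and> P z)"
proof -
  have filter_eq: "{c\<in>{x, y, z}. P c} =
      (if P x then {x} else {}) \<union> (if P y then {y} else {}) \<union> (if P z then {z} else {})"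
    by auto
  show ?thesis
    unfolding filter_eq using assms
    by (cases "P x"; cases "P y"; cases "P z"; simp add: card_insert_if insert_commute)
qed

lemma locally_valid_iff_valid_vertex:
  "locally_valid n \<mu> \<longleftrightarrow>
     (\<forall>k\<in>{1..n-1}. valid_vertex (\<mu> (3*k-3)) (\<mu> (3*k-1)) (\<mu> (3*k)) (\<mu> (3*k+1)))"
proof -
  have "card {c\<in>{3*k-1, 3*k, 3*k+1}. \<mu> c \<noteq> \<mu> (3*k-3)} = 1 \<longleftrightarrow>
      valid_vertex (\<mu> (3*k-3)) (\<mu> (3*k-1)) (\<mu> (3*k)) (\<mu> (3*k+1))"
    if "k \<ge> 1" for k
    using that card_filter_three_eq_1[of "3*k-1" "3*k" "3*k+1" "\<lambda>c. \<mu> c \<noteq> \<mu> (3*k-3)"]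
    unfolding valid_vertex_def by auto
  then show ?thesis
    unfolding locally_valid_def by auto
qed

lemma vertex_creases_MV:
  assumes mv: "is_MV n \<mu>" and k: "k \<in> {1..n-1}"
  shows "\<mu> (3*k-3) \<in> {1, -1}" "\<mu> (3*k-1) \<in> {1, -1}"
    and "\<mu> (3*k) \<in> {1, -1}" "\<mu> (3*k+1) \<in> {1, -1}"
proof -
  have "3*k-3 \<in> creases n"
  proof (cases "k = 1")
    case False
    with k have "3*k-3 = 3*(k-1)" "k-1 \<in> {1..n-1}" by auto
    then show ?thesis unfolding creases_def by blast
  qed (simp add: creases_def)
  moreover have "3*k-1 \<in> creases n" "3*k \<in> creases n" "3*k+1 \<in> creases n"
    using k unfolding creases_def by auto
  ultimately show "\<mu> (3*k-3) \<in> {1, -1}" "\<mu> (3*k-1) \<in> {1, -1}"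
    "\<mu> (3*k) \<in> {1, -1}" "\<mu> (3*k+1) \<in> {1, -1}"
    using mv unfolding is_MV_def by auto
qed

lemma face_flip_upper_at_vertex:
  assumes "m \<in> {1..n-1}" "j \<in> {1..n}"
  shows "face_flip n \<mu> (1, j) (3*m-3) = (if j = m then - \<mu> (3*m-3) else \<mu> (3*m-3))"
    and "face_flip n \<mu> (1, j) (3*m-1) = (if j = m \<or> j = m+1 then - \<mu> (3*m-1) else \<mu> (3*m-1))"
    and "face_flip n \<mu> (1, j) (3*m) = (if j = m+1 then - \<mu> (3*m) else \<mu> (3*m))"
    and "face_flip n \<mu> (1, j) (3*m+1) = \<mu> (3*m+1)"
  using assms unfolding face_flip_def border_def by (auto split: if_splits; presburger)+

lemma face_flip_lower_at_vertex:
  assumes "m \<in> {1..n-1}" "j \<in> {1..n}"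
  shows "face_flip n \<mu> (2, j) (3*m-3) = (if j = m then - \<mu> (3*m-3) else \<mu> (3*m-3))"
    and "face_flip n \<mu> (2, j) (3*m-1) = \<mu> (3*m-1)"
    and "face_flip n \<mu> (2, j) (3*m) = (if j = m+1 then - \<mu> (3*m) else \<mu> (3*m))"
    and "face_flip n \<mu> (2, j) (3*m+1) = (if j = m \<or> j = m+1 then - \<mu> (3*m+1) else \<mu> (3*m+1))"
  using assms unfolding face_flip_def border_def by (auto split: if_splits; presburger)+

lemma flippable_valid_vertex:
  assumes "flippable n \<mu> f" and "k \<in> {1..n-1}"
  shows "valid_vertex (face_flip n \<mu> f (3*k-3)) (face_flip n \<mu> f (3*k-1))
    (face_flip n \<mu> f (3*k)) (face_flip n \<mu> f (3*k+1))"
  using assms unfolding flippable_def locally_valid_iff_valid_vertex by blast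

lemma flippable_if_right_creases_odd:
  assumes mv: "is_MV n \<mu>" and lv: "locally_valid n \<mu>"
    and right_odd: "\<forall>k\<in>{1..n-1}. \<mu> (3*k-1) = \<mu> (3*k-3) \<and> \<mu> (3*k+1) = \<mu> (3*k-3)"
    and f: "f \<in> faces n"
  shows "flippable n \<mu> f"
proof -
  obtain i j where ij: "f = (i, j)" "i = 1 \<or> i = 2" "j \<in> {1..n}"
    using f unfolding faces_def by auto
  have "valid_vertex (face_flip n \<mu> f (3*m-3)) (face_flip n \<mu> f (3*m-1))
      (face_flip n \<mu> f (3*m)) (face_flip n \<mu> f (3*m+1))" if m: "m \<in> {1..n-1}" for m
  proof -
    have v: "valid_vertex (\<mu> (3*m-3)) (\<mu> (3*m-1)) (\<mu> (3*m)) (\<mu> (3*m+1))"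
      using lv m unfolding locally_valid_iff_valid_vertex by blast
    show ?thesis
      using ij right_odd m v valid_vertex_flip[OF v vertex_creases_MV[OF mv m]]
        face_flip_upper_at_vertex[OF m ij(3)] face_flip_lower_at_vertex[OF m ij(3)]
      by (cases "j = m"; cases "j = m+1"; auto)
  qed
  then show ?thesis
    using lv unfolding flippable_def locally_valid_iff_valid_vertex by blast
qed

lemma not_flippable_if_top_crease_odd:
  assumes mv: "is_MV n \<mu>" and lv: "locally_valid n \<mu>" and k: "k \<in> {1..n-1}"
    and top: "\<mu> (3*k-1) \<noteq> \<mu> (3*k-3)"
  shows "\<not> flippable n \<mu> (1, k)" "\<not> flippable n \<mu> (2, k+1)"
proof -
  have v: "valid_vertex (\<mu> (3*k-3)) (\<mu> (3*k-1)) (\<mu> (3*k)) (\<mu> (3*k+1))"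
    using lv k unfolding locally_valid_iff_valid_vertex by blast
  note flip = valid_vertex_flip[OF v vertex_creases_MV[OF mv k]]
  have columns: "k \<in> {1..n}" "k+1 \<in> {1..n}"
    using k by auto
  show "\<not> flippable n \<mu> (1, k)"
    using flippable_valid_vertex[of n \<mu> "(1, k)" k] k face_flip_upper_at_vertex[OF k columns(1)]
      top flip
    by auto
  show "\<not> flippable n \<mu> (2, k+1)"
    using flippable_valid_vertex[of n \<mu> "(2, k+1)" k] k face_flip_lower_at_vertex[OF k columns(2)]
      top flip
    by auto
qed

lemma not_flippable_if_bottom_crease_odd:
  assumes mv: "is_MV n \<mu>" and lv: "locally_valid n \<mu>" and k: "k \<in> {1..n-1}"
    and bottom: "\<mu> (3*k+1) \<noteq> \<mu> (3*k-3)"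
  shows "\<not> flippable n \<mu> (2, k)" "\<not> flippable n \<mu> (1, k+1)"
proof -
  have v: "valid_vertex (\<mu> (3*k-3)) (\<mu> (3*k-1)) (\<mu> (3*k)) (\<mu> (3*k+1))"
    using lv k unfolding locally_valid_iff_valid_vertex by blast
  note flip = valid_vertex_flip[OF v vertex_creases_MV[OF mv k]]
  have columns: "k \<in> {1..n}" "k+1 \<in> {1..n}"
    using k by auto
  show "\<not> flippable n \<mu> (2, k)"
    using flippable_valid_vertex[of n \<mu> "(2, k)" k] k face_flip_lower_at_vertex[OF k columns(1)]
      bottom flip
    by auto
  show "\<not> flippable n \<mu> (1, k+1)"
    using flippable_valid_vertex[of n \<mu> "(1, k+1)" k] k face_flip_upper_at_vertex[OF k columns(2)]
      bottom flip
    by auto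
qed

lemma card_faces: "card (faces n) = 2 * n"
  unfolding faces_def by (simp add: card_cartesian_product)

lemma ofg_degree_le_if_two_unflippable:
  assumes "f \<in> faces n" "g \<in> faces n" "f \<noteq> g" "\<not> flippable n \<mu> f" "\<not> flippable n \<mu> g"
  shows "ofg_degree n \<mu> \<le> 2 * n - 2"
proof -
  have "ofg_degree n \<mu> \<le> card (faces n - {f, g})"
    unfolding ofg_degree_def using assms by (intro card_mono) (auto simp: faces_def)
  also have "\<dots> = 2 * n - 2"
    using assms by (simp add: card_faces faces_def)
  finally show ?thesis .
qed

theorem lemma4p8:
  fixes n :: nat and \<mu> :: "nat \<Rightarrow> int"
  assumes "n \<ge> 1" and "is_MV n \<mu>" and "locally_valid n \<mu>"
  shows "ofg_degree n \<mu> \<noteq> 2 * n - 1"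
proof (cases "\<forall>k\<in>{1..n-1}. \<mu> (3*k-1) = \<mu> (3*k-3) \<and> \<mu> (3*k+1) = \<mu> (3*k-3)")
  case True
  then have "{f\<in>faces n. flippable n \<mu> f} = faces n"
    using flippable_if_right_creases_odd[OF assms(2,3)] by blast
  then have "ofg_degree n \<mu> = 2 * n"
    unfolding ofg_degree_def by (simp add: card_faces)
  with \<open>n \<ge> 1\<close> show ?thesis by simp
next
  case False
  then obtain k where k: "k \<in> {1..n-1}"
    and odd: "\<mu> (3*k-1) \<noteq> \<mu> (3*k-3) \<or> \<mu> (3*k+1) \<noteq> \<mu> (3*k-3)"
    by blast
  have faces: "(1, k) \<in> faces n" "(2, k+1) \<in> faces n" "(2, k) \<in> faces n" "(1, k+1) \<in> faces n"
    using k unfolding faces_def by auto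
  from odd have "ofg_degree n \<mu> \<le> 2 * n - 2"
  proof
    assume "\<mu> (3*k-1) \<noteq> \<mu> (3*k-3)"
    with ofg_degree_le_if_two_unflippable[OF faces(1,2)] show ?thesis
      using not_flippable_if_top_crease_odd[OF assms(2,3) k] by simp
  next
    assume "\<mu> (3*k+1) \<noteq> \<mu> (3*k-3)"
    with ofg_degree_le_if_two_unflippable[OF faces(3,4)] show ?thesis
      using not_flippable_if_bottom_crease_odd[OF assms(2,3) k] by simp
  qed
  with k show ?thesis by auto
qed

end
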